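(* Consider the instrumental-variables model described in the context, with $\pi_1\neq 0$, under Assumption B. Let $(\lambda_n)$ satisfy $\lambda_n=o(\sqrt n)$. Then the ridge IV estimator \[ \hat\beta_{\text{ridge}} = \frac{\sum_{i=1}^n (Y_i-\bar Y)(Z_i-\bar Z)}{\sum_{i=1}^n (D_i-\bar D)(Z_i-\bar Z) + \lambda_n} \] is asymptotically normal with \[ \sqrt n\left(\hat\beta_{\text{ridge}}-\beta_1\right) \xrightarrow{d} \mathcal N\!\left(0,\ \frac{\sigma_\epsilon^2}{\pi_1^2}\right). \]
   Context: Data model: for each sample size $n$, observations $(Y_i,D_i,Z_i)$, $i=1,\dots,n$, satisfy $Y_i=\beta_0+\beta_1 D_i+\epsilon_i$ and $D_i=\pi_0+\pi_1 Z_i+\eta_i$, where the error pairs $(\epsilon_i,\eta_i)$ are i.i.d. across $i$ with mean zero, $\mathrm{Var}(\epsilon_i)=\sigma_\epsilon^2<\infty$, $\mathrm{Var}(\eta_i)=\sigma_\eta^2<\infty$ and $\mathrm{Cov}(\epsilon_i,\eta_i)=\sigma_{\epsilon\eta}$ (the errors may be correlated). Bars denote sample means. The penalty $\lambda_n$ is a deterministic sequence of nonnegative reals. Assumption B (stochastic instruments): the $Z_i$ are i.i.d. random variables, independent of the errors, with $\mathrm{Var}(Z_i)=1$ and finite fourth moment $m_4=E[Z_i^4]$. *)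

theory Defs
  imports "HOL-Probability.Probability"
begin

definition normal_measure :: "real \<Rightarrow> real \<Rightarrow> real measure" where
  "normal_measure mu v =
     (if v = 0 then return borel mu else density lborel (normal_density mu (sqrt v)))"

definition smean :: "nat \<Rightarrow> (nat \<Rightarrow> real) \<Rightarrow> real" where
  "smean n X = (\<Sum>i<n. X i) / real n"

definition ridge_iv :: "nat \<Rightarrow> real \<Rightarrow> (nat \<Rightarrow> real) \<Rightarrow> (nat \<Rightarrow> real) \<Rightarrow> (nat \<Rightarrow> real) \<Rightarrow> real" where
  "ridge_iv n lam Y D Z =
     (\<Sum>i<n. (Y i - smean n Y) * (Z i - smean n Z)) /
     ((\<Sum>i<n. (D i - smean n D) * (Z i - smean n Z)) + lam)"

end

(* Write z_i = Z_i - E Z_1. After centring, sqrt n (beta_ridge - beta_1) = (U_n + R_n) / V_n with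
   U_n = n^(-1/2) sum eps_i z_i, V_n = (sum (D_i - Dbar)(Z_i - Zbar) + lambda_n) / n, and a remainder
   R_n = -(n^(-1/2) sum eps_i)(n^(-1) sum z_i) - beta_1 lambda_n / sqrt n.
   Chebyshev's inequality gives weak laws of large numbers for the sample means of z_i, z_i^2 - 1,
   eta_i and eta_i z_i, so V_n -> pi_1 and, as lambda_n = o(sqrt n), R_n -> 0 in probability.
   Independence of Z and the errors makes eps_i z_i centred i.i.d. with variance sigma_eps^2, so
   U_n is bounded in L^2 and tends to N(0, sigma_eps^2) by the central limit theorem.
   Slutsky's lemma then gives the limit U_n / pi_1 ~ N(0, sigma_eps^2 / pi_1^2). *)

theory Submission
  imports Defs
begin

section \<open>Convergence to zero in probability\<close>

definition vanishes_in_prob :: "'a measure \<Rightarrow> (nat \<Rightarrow> 'a \<Rightarrow> real) \<Rightarrow> bool" where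
  "vanishes_in_prob M X \<longleftrightarrow> (\<forall>n. X n \<in> borel_measurable M) \<and>
     (\<forall>d>0. (\<lambda>n. measure M {\<omega>\<in>space M. d < \<bar>X n \<omega>\<bar>}) \<longlonglongrightarrow> 0)"

context prob_space
begin

lemma vanishes_in_prob_measurable: "vanishes_in_prob M X \<Longrightarrow> X n \<in> borel_measurable M"
  unfolding vanishes_in_prob_def by blast

lemma vanishes_in_prob_tendsto:
  "vanishes_in_prob M X \<Longrightarrow> d > 0 \<Longrightarrow> (\<lambda>n. prob {\<omega>\<in>space M. d < \<bar>X n \<omega>\<bar>}) \<longlonglongrightarrow> 0"
  unfolding vanishes_in_prob_def by blast

lemma prob_le_prob_disj:
  assumes "{\<omega>\<in>space M. Q1 \<omega>} \<in> events" "{\<omega>\<in>space M. Q2 \<omega>} \<in> events"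
    and "\<And>\<omega>. \<omega> \<in> space M \<Longrightarrow> P \<omega> \<Longrightarrow> Q1 \<omega> \<or> Q2 \<omega>"
  shows "prob {\<omega>\<in>space M. P \<omega>} \<le> prob {\<omega>\<in>space M. Q1 \<omega>} + prob {\<omega>\<in>space M. Q2 \<omega>}"
proof -
  have "prob {\<omega>\<in>space M. P \<omega>} \<le> prob ({\<omega>\<in>space M. Q1 \<omega>} \<union> {\<omega>\<in>space M. Q2 \<omega>})"
    using assms by (intro finite_measure_mono) auto
  also have "\<dots> \<le> prob {\<omega>\<in>space M. Q1 \<omega>} + prob {\<omega>\<in>space M. Q2 \<omega>}"
    using assms(1,2) by (rule measure_Un_le)
  finally show ?thesis .
qed

lemma vanishes_in_prob_dominated:
  assumes X1: "vanishes_in_prob M X1" and X2: "vanishes_in_prob M X2"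
    and [measurable]: "\<And>n. Y n \<in> borel_measurable M"
    and dom: "\<And>d. d > 0 \<Longrightarrow> \<exists>c>0. \<forall>\<^sub>F n in sequentially. \<forall>\<omega>\<in>space M.
                 d < \<bar>Y n \<omega>\<bar> \<longrightarrow> c < \<bar>X1 n \<omega>\<bar> \<or> c < \<bar>X2 n \<omega>\<bar>"
  shows "vanishes_in_prob M Y"
  unfolding vanishes_in_prob_def
proof (intro conjI allI impI)
  fix d :: real assume "d > 0"
  then obtain c where "c > 0" and c: "\<forall>\<^sub>F n in sequentially. \<forall>\<omega>\<in>space M.
                 d < \<bar>Y n \<omega>\<bar> \<longrightarrow> c < \<bar>X1 n \<omega>\<bar> \<or> c < \<bar>X2 n \<omega>\<bar>"
    using dom by blast
  have [measurable]: "X1 n \<in> borel_measurable M" "X2 n \<in> borel_measurable M" for n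
    using X1 X2 by (auto intro: vanishes_in_prob_measurable)
  have events: "{\<omega>\<in>space M. c < \<bar>X1 n \<omega>\<bar>} \<in> events" "{\<omega>\<in>space M. c < \<bar>X2 n \<omega>\<bar>} \<in> events" for n
    by measurable
  have lim: "(\<lambda>n. prob {\<omega>\<in>space M. c < \<bar>X1 n \<omega>\<bar>} + prob {\<omega>\<in>space M. c < \<bar>X2 n \<omega>\<bar>}) \<longlonglongrightarrow> 0"
    using tendsto_add[OF vanishes_in_prob_tendsto[OF X1 \<open>c > 0\<close>] vanishes_in_prob_tendsto[OF X2 \<open>c > 0\<close>]]
    by simp
  have "\<forall>\<^sub>F n in sequentially. prob {\<omega>\<in>space M. d < \<bar>Y n \<omega>\<bar>} \<le>
      prob {\<omega>\<in>space M. c < \<bar>X1 n \<omega>\<bar>} + prob {\<omega>\<in>space M. c < \<bar>X2 n \<omega>\<bar>}"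
    using c by eventually_elim (rule prob_le_prob_disj[OF events]; blast)
  from tendsto_sandwich[OF _ this tendsto_const lim]
  show "(\<lambda>n. prob {\<omega>\<in>space M. d < \<bar>Y n \<omega>\<bar>}) \<longlonglongrightarrow> 0"
    by simp
qed simp

lemma vanishes_in_prob_add:
  assumes X: "vanishes_in_prob M X" and Y: "vanishes_in_prob M Y"
  shows "vanishes_in_prob M (\<lambda>n \<omega>. X n \<omega> + Y n \<omega>)"
proof (rule vanishes_in_prob_dominated[OF X Y])
  show "(\<lambda>\<omega>. X n \<omega> + Y n \<omega>) \<in> borel_measurable M" for n
    using X Y by (intro borel_measurable_add vanishes_in_prob_measurable)
  fix d :: real assume "d > 0"
  have "d/2 < \<bar>X n \<omega>\<bar> \<or> d/2 < \<bar>Y n \<omega>\<bar>" if "d < \<bar>X n \<omega> + Y n \<omega>\<bar>" for n \<omega>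
    using that abs_triangle_ineq[of "X n \<omega>" "Y n \<omega>"] by linarith
  with \<open>d > 0\<close> show "\<exists>c>0. \<forall>\<^sub>F n in sequentially. \<forall>\<omega>\<in>space M.
      d < \<bar>X n \<omega> + Y n \<omega>\<bar> \<longrightarrow> c < \<bar>X n \<omega>\<bar> \<or> c < \<bar>Y n \<omega>\<bar>"
    by (intro exI[of _ "d/2"]) auto
qed

lemma vanishes_in_prob_cmult:
  assumes X: "vanishes_in_prob M X"
  shows "vanishes_in_prob M (\<lambda>n \<omega>. c * X n \<omega>)"
proof (rule vanishes_in_prob_dominated[OF X X])
  show "(\<lambda>\<omega>. c * X n \<omega>) \<in> borel_measurable M" for n
    using X by (intro borel_measurable_times borel_measurable_const vanishes_in_prob_measurable)
  fix d :: real assume d: "d > 0"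
  have "d / (\<bar>c\<bar> + 1) < \<bar>X n \<omega>\<bar>" if "d < \<bar>c * X n \<omega>\<bar>" for n \<omega>
  proof -
    have "\<bar>c * X n \<omega>\<bar> \<le> (\<bar>c\<bar> + 1) * \<bar>X n \<omega>\<bar>"
      unfolding abs_mult by (intro mult_right_mono) auto
    with that show ?thesis
      by (simp add: pos_divide_less_eq mult.commute add_pos_nonneg)
  qed
  with d show "\<exists>e>0. \<forall>\<^sub>F n in sequentially. \<forall>\<omega>\<in>space M.
      d < \<bar>c * X n \<omega>\<bar> \<longrightarrow> e < \<bar>X n \<omega>\<bar> \<or> e < \<bar>X n \<omega>\<bar>"
    by (intro exI[of _ "d / (\<bar>c\<bar> + 1)"]) (auto simp: add_pos_nonneg)
qed

lemma vanishes_in_prob_diff: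
  assumes "vanishes_in_prob M X" and "vanishes_in_prob M Y"
  shows "vanishes_in_prob M (\<lambda>n \<omega>. X n \<omega> - Y n \<omega>)"
  using vanishes_in_prob_add[OF assms(1) vanishes_in_prob_cmult[OF assms(2), of "-1"]] by simp

lemma vanishes_in_prob_mult:
  assumes X: "vanishes_in_prob M X" and Y: "vanishes_in_prob M Y"
  shows "vanishes_in_prob M (\<lambda>n \<omega>. X n \<omega> * Y n \<omega>)"
proof (rule vanishes_in_prob_dominated[OF X Y])
  show "(\<lambda>\<omega>. X n \<omega> * Y n \<omega>) \<in> borel_measurable M" for n
    using X Y by (intro borel_measurable_times vanishes_in_prob_measurable)
  fix d :: real assume d: "d > 0"
  have "min 1 d < \<bar>X n \<omega>\<bar> \<or> min 1 d < \<bar>Y n \<omega>\<bar>" if "d < \<bar>X n \<omega> * Y n \<omega>\<bar>" for n \<omega>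
  proof (rule ccontr)
    assume "\<not> ?thesis"
    then have "\<bar>X n \<omega>\<bar> * \<bar>Y n \<omega>\<bar> \<le> 1 * d"
      by (intro mult_mono) auto
    with that show False by (simp add: abs_mult)
  qed
  with d show "\<exists>c>0. \<forall>\<^sub>F n in sequentially. \<forall>\<omega>\<in>space M.
      d < \<bar>X n \<omega> * Y n \<omega>\<bar> \<longrightarrow> c < \<bar>X n \<omega>\<bar> \<or> c < \<bar>Y n \<omega>\<bar>"
    by (intro exI[of _ "min 1 d"]) auto
qed

lemma vanishes_in_prob_const:
  assumes "a \<longlonglongrightarrow> 0"
  shows "vanishes_in_prob M (\<lambda>n \<omega>. a n)"
  unfolding vanishes_in_prob_def
proof (intro conjI allI impI)
  fix d :: real assume "d > 0"
  then have "\<forall>\<^sub>F n in sequentially. \<bar>a n\<bar> < d"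
    using assms by (intro order_tendstoD(2)) (auto simp: tendsto_rabs_zero_iff)
  then have "\<forall>\<^sub>F n in sequentially. prob {\<omega>\<in>space M. d < \<bar>a n\<bar>} = 0"
    by eventually_elim auto
  then show "(\<lambda>n. prob {\<omega>\<in>space M. d < \<bar>a n\<bar>}) \<longlonglongrightarrow> 0"
    by (rule tendsto_eventually)
qed simp

lemma abs_inverse_diff_le:
  fixes v c :: real
  assumes "c \<noteq> 0" and "\<bar>v - c\<bar> \<le> \<bar>c\<bar> / 2"
  shows "\<bar>1 / v - 1 / c\<bar> \<le> 2 * \<bar>v - c\<bar> / c\<^sup>2"
proof -
  have v: "\<bar>c\<bar> / 2 \<le> \<bar>v\<bar>" "v \<noteq> 0"
    using assms by arith+
  have "\<bar>1 / v - 1 / c\<bar> = \<bar>v - c\<bar> / (\<bar>v\<bar> * \<bar>c\<bar>)"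
    using assms(1) v(2) by (simp add: field_simps abs_mult flip: abs_minus_commute)
  also have "\<dots> \<le> \<bar>v - c\<bar> / (\<bar>c\<bar> / 2 * \<bar>c\<bar>)"
  proof (rule divide_left_mono)
    show "\<bar>c\<bar> / 2 * \<bar>c\<bar> \<le> \<bar>v\<bar> * \<bar>c\<bar>"
      using v(1) by (rule mult_right_mono) simp
    show "0 < \<bar>v\<bar> * \<bar>c\<bar> * (\<bar>c\<bar> / 2 * \<bar>c\<bar>)"
      using assms(1) v(2) by (intro mult_pos_pos) auto
  qed simp
  also have "\<dots> = 2 * \<bar>v - c\<bar> / c\<^sup>2"
    by (simp add: power2_eq_square abs_mult_self)
  finally show ?thesis .
qed

lemma vanishes_in_prob_inverse:
  assumes V: "vanishes_in_prob M (\<lambda>n \<omega>. V n \<omega> - c)" and c: "c \<noteq> 0"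
  shows "vanishes_in_prob M (\<lambda>n \<omega>. 1 / V n \<omega> - 1 / c)"
proof (rule vanishes_in_prob_dominated[OF V V])
  have [measurable]: "V n \<in> borel_measurable M" for n
    using borel_measurable_add[OF vanishes_in_prob_measurable[OF V] borel_measurable_const[of c]] by simp
  show "(\<lambda>\<omega>. 1 / V n \<omega> - 1 / c) \<in> borel_measurable M" for n
    by measurable
  fix d :: real assume d: "d > 0"
  define e where "e = min (\<bar>c\<bar> / 2) (d * c\<^sup>2 / 2)"
  have "e < \<bar>V n \<omega> - c\<bar>" if "d < \<bar>1 / V n \<omega> - 1 / c\<bar>" for n \<omega>
  proof (rule ccontr)
    assume "\<not> ?thesis"
    then have close: "\<bar>V n \<omega> - c\<bar> \<le> \<bar>c\<bar> / 2" and "\<bar>V n \<omega> - c\<bar> \<le> d * c\<^sup>2 / 2"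
      unfolding e_def by linarith+
    then have "2 * \<bar>V n \<omega> - c\<bar> / c\<^sup>2 \<le> d"
      using c by (subst pos_divide_le_eq) auto
    with abs_inverse_diff_le[OF c close] that show False
      by linarith
  qed
  moreover have "e > 0"
    using c d by (simp add: e_def)
  ultimately show "\<exists>e>0. \<forall>\<^sub>F n in sequentially. \<forall>\<omega>\<in>space M.
      d < \<bar>1 / V n \<omega> - 1 / c\<bar> \<longrightarrow> e < \<bar>V n \<omega> - c\<bar> \<or> e < \<bar>V n \<omega> - c\<bar>"
    by (intro exI[of _ e]) (auto intro!: always_eventually)
qed

lemma prob_abs_gt_le_second_moment:
  assumes [measurable]: "Y \<in> borel_measurable M" and I: "integrable M (\<lambda>\<omega>. (Y \<omega>)\<^sup>2)" and d: "d > 0"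
  shows "prob {\<omega>\<in>space M. d < \<bar>Y \<omega>\<bar>} \<le> expectation (\<lambda>\<omega>. (Y \<omega>)\<^sup>2) / d\<^sup>2"
proof -
  have "d\<^sup>2 \<le> (Y \<omega>)\<^sup>2" if "d < \<bar>Y \<omega>\<bar>" for \<omega>
    using power_mono[of d "\<bar>Y \<omega>\<bar>" 2] that d by simp
  then have "prob {\<omega>\<in>space M. d < \<bar>Y \<omega>\<bar>} \<le> prob {\<omega>\<in>space M. d\<^sup>2 \<le> (Y \<omega>)\<^sup>2}"
    by (intro finite_measure_mono) auto
  also have "\<dots> \<le> expectation (\<lambda>\<omega>. (Y \<omega>)\<^sup>2) / d\<^sup>2"
    using d by (intro integral_Markov_inequality_measure[OF I, where A="space M"]) auto
  finally show ?thesis .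
qed

lemma vanishes_in_prob_second_moment:
  assumes [measurable]: "\<And>n. Y n \<in> borel_measurable M"
    and I: "\<And>n. integrable M (\<lambda>\<omega>. (Y n \<omega>)\<^sup>2)"
    and lim: "(\<lambda>n. expectation (\<lambda>\<omega>. (Y n \<omega>)\<^sup>2)) \<longlonglongrightarrow> 0"
  shows "vanishes_in_prob M Y"
  unfolding vanishes_in_prob_def
proof (intro conjI allI impI)
  fix d :: real assume d: "d > 0"
  have bound_lim: "(\<lambda>n. expectation (\<lambda>\<omega>. (Y n \<omega>)\<^sup>2) / d\<^sup>2) \<longlonglongrightarrow> 0"
    using tendsto_divide[OF lim tendsto_const, of "d\<^sup>2"] d by simp
  have "\<forall>\<^sub>F n in sequentially.
      prob {\<omega>\<in>space M. d < \<bar>Y n \<omega>\<bar>} \<le> expectation (\<lambda>\<omega>. (Y n \<omega>)\<^sup>2) / d\<^sup>2"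
    using prob_abs_gt_le_second_moment[OF _ I d] by (simp add: always_eventually)
  from tendsto_sandwich[OF _ this tendsto_const bound_lim]
  show "(\<lambda>n. prob {\<omega>\<in>space M. d < \<bar>Y n \<omega>\<bar>}) \<longlonglongrightarrow> 0"
    by simp
qed simp

lemma prob_abs_mult_gt_le:
  assumes [measurable]: "X \<in> borel_measurable M" "Y \<in> borel_measurable M"
    and I: "integrable M (\<lambda>\<omega>. (Y \<omega>)\<^sup>2)" and K: "K > 0"
  shows "prob {\<omega>\<in>space M. d < \<bar>Y \<omega> * X \<omega>\<bar>}
    \<le> expectation (\<lambda>\<omega>. (Y \<omega>)\<^sup>2) / K\<^sup>2 + prob {\<omega>\<in>space M. d / K < \<bar>X \<omega>\<bar>}"
proof -
  have small: "\<bar>Y \<omega> * X \<omega>\<bar> \<le> d" if "\<bar>Y \<omega>\<bar> \<le> K" "\<bar>X \<omega>\<bar> \<le> d / K" for \<omega>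
    using mult_mono[OF that] K by (simp add: abs_mult)
  have events: "{\<omega>\<in>space M. K < \<bar>Y \<omega>\<bar>} \<in> events" "{\<omega>\<in>space M. d / K < \<bar>X \<omega>\<bar>} \<in> events"
    by measurable
  have "prob {\<omega>\<in>space M. d < \<bar>Y \<omega> * X \<omega>\<bar>}
      \<le> prob {\<omega>\<in>space M. K < \<bar>Y \<omega>\<bar>} + prob {\<omega>\<in>space M. d / K < \<bar>X \<omega>\<bar>}"
    by (rule prob_le_prob_disj[OF events]) (meson small not_le)
  also have "prob {\<omega>\<in>space M. K < \<bar>Y \<omega>\<bar>} \<le> expectation (\<lambda>\<omega>. (Y \<omega>)\<^sup>2) / K\<^sup>2"
    by (rule prob_abs_gt_le_second_moment[OF _ I K]) measurable
  finally show ?thesis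
    by simp
qed

lemma vanishes_in_prob_mult_bounded_second_moment:
  assumes X: "vanishes_in_prob M X" and [measurable]: "\<And>n. Y n \<in> borel_measurable M"
    and I: "\<And>n. integrable M (\<lambda>\<omega>. (Y n \<omega>)\<^sup>2)"
    and C: "\<And>n. expectation (\<lambda>\<omega>. (Y n \<omega>)\<^sup>2) \<le> C"
  shows "vanishes_in_prob M (\<lambda>n \<omega>. Y n \<omega> * X n \<omega>)"
  unfolding vanishes_in_prob_def
proof (intro conjI allI impI)
  have [measurable]: "X n \<in> borel_measurable M" for n
    using X by (rule vanishes_in_prob_measurable)
  show "(\<lambda>\<omega>. Y n \<omega> * X n \<omega>) \<in> borel_measurable M" for n
    by measurable
  fix d :: real assume d: "d > 0"
  show "(\<lambda>n. prob {\<omega>\<in>space M. d < \<bar>Y n \<omega> * X n \<omega>\<bar>}) \<longlonglongrightarrow> 0"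
  proof (rule LIMSEQ_I)
    fix r :: real assume r: "r > 0"
    define K where "K = 2 * \<bar>C\<bar> / r + 1"
    have "K \<ge> 1" and "2 * \<bar>C\<bar> / r < K"
      using r by (auto simp: K_def)
    moreover have "K \<le> K * K"
      using \<open>K \<ge> 1\<close> by (simp add: mult_le_cancel_left1)
    ultimately have "2 * \<bar>C\<bar> / r < K * K"
      by linarith
    with \<open>K \<ge> 1\<close> r have K: "K > 0" "C / K\<^sup>2 < r / 2"
      by (auto simp: field_simps power2_eq_square)
    obtain N where N: "\<And>n. n \<ge> N \<Longrightarrow> prob {\<omega>\<in>space M. d / K < \<bar>X n \<omega>\<bar>} < r / 2"
      using LIMSEQ_D[OF vanishes_in_prob_tendsto[OF X], of "d / K" "r / 2"] d K(1) r by auto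
    have "prob {\<omega>\<in>space M. d < \<bar>Y n \<omega> * X n \<omega>\<bar>} < r" if "n \<ge> N" for n
    proof -
      have "prob {\<omega>\<in>space M. d < \<bar>Y n \<omega> * X n \<omega>\<bar>}
          \<le> expectation (\<lambda>\<omega>. (Y n \<omega>)\<^sup>2) / K\<^sup>2 + prob {\<omega>\<in>space M. d / K < \<bar>X n \<omega>\<bar>}"
        by (rule prob_abs_mult_gt_le[OF _ _ I K(1)]) measurable
      moreover have "expectation (\<lambda>\<omega>. (Y n \<omega>)\<^sup>2) / K\<^sup>2 \<le> C / K\<^sup>2"
        using C[of n] by (simp add: divide_right_mono)
      ultimately show ?thesis
        using N[OF that] K(2) by linarith
    qed
    then show "\<exists>N. \<forall>n\<ge>N. norm (prob {\<omega>\<in>space M. d < \<bar>Y n \<omega> * X n \<omega>\<bar>} - 0) < r"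
      by auto
  qed
qed

lemma vanishes_in_prob_eventually_eq:
  assumes X: "vanishes_in_prob M X" and W: "vanishes_in_prob M W" and c: "c > 0"
    and [measurable]: "\<And>n. Y n \<in> borel_measurable M"
    and eq: "\<forall>\<^sub>F n in sequentially. \<forall>\<omega>\<in>space M. \<bar>W n \<omega>\<bar> \<le> c \<longrightarrow> Y n \<omega> = X n \<omega>"
  shows "vanishes_in_prob M Y"
proof (rule vanishes_in_prob_dominated[OF X W])
  fix d :: real assume "d > 0"
  have "\<forall>\<^sub>F n in sequentially. \<forall>\<omega>\<in>space M.
      d < \<bar>Y n \<omega>\<bar> \<longrightarrow> min d c < \<bar>X n \<omega>\<bar> \<or> min d c < \<bar>W n \<omega>\<bar>"
    using eq by eventually_elim (metis min.strict_coboundedI1 min.strict_coboundedI2 not_le)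
  with \<open>d > 0\<close> c show "\<exists>e>0. \<forall>\<^sub>F n in sequentially. \<forall>\<omega>\<in>space M.
      d < \<bar>Y n \<omega>\<bar> \<longrightarrow> e < \<bar>X n \<omega>\<bar> \<or> e < \<bar>W n \<omega>\<bar>"
    by (intro exI[of _ "min d c"]) auto
qed simp

lemma vanishes_in_prob_cong_eventually:
  assumes X: "vanishes_in_prob M X" and [measurable]: "\<And>n. Y n \<in> borel_measurable M"
    and eq: "\<forall>\<^sub>F n in sequentially. \<forall>\<omega>\<in>space M. Y n \<omega> = X n \<omega>"
  shows "vanishes_in_prob M Y"
  using eq by (intro vanishes_in_prob_eventually_eq[OF X vanishes_in_prob_const[OF tendsto_const], of 1]) auto

lemma vanishes_in_prob_ratio:
  assumes V: "vanishes_in_prob M (\<lambda>n \<omega>. V n \<omega> - c)" and c: "c \<noteq> 0"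
    and R: "vanishes_in_prob M R"
    and [measurable]: "\<And>n. U n \<in> borel_measurable M"
    and I: "\<And>n. integrable M (\<lambda>\<omega>. (U n \<omega>)\<^sup>2)"
    and C: "\<And>n. expectation (\<lambda>\<omega>. (U n \<omega>)\<^sup>2) \<le> C"
    and [measurable]: "\<And>n. T n \<in> borel_measurable M"
    and eq: "\<forall>\<^sub>F n in sequentially. \<forall>\<omega>\<in>space M. V n \<omega> \<noteq> 0 \<longrightarrow> T n \<omega> = (U n \<omega> + R n \<omega>) / V n \<omega>"
  shows "vanishes_in_prob M (\<lambda>n \<omega>. T n \<omega> - U n \<omega> / c)"
proof (rule vanishes_in_prob_eventually_eq[OF _ V])
  have inv: "vanishes_in_prob M (\<lambda>n \<omega>. 1 / V n \<omega> - 1 / c)"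
    using V c by (rule vanishes_in_prob_inverse)
  show "vanishes_in_prob M (\<lambda>n \<omega>. R n \<omega> * (1 / V n \<omega> - 1 / c) + (1 / c) * R n \<omega>
      + U n \<omega> * (1 / V n \<omega> - 1 / c))"
    by (intro vanishes_in_prob_add vanishes_in_prob_mult vanishes_in_prob_cmult R inv
        vanishes_in_prob_mult_bounded_second_moment[OF inv _ I C]) measurable
  show "0 < \<bar>c\<bar> / 2"
    using c by simp
  show "(\<lambda>\<omega>. T n \<omega> - U n \<omega> / c) \<in> borel_measurable M" for n
    by measurable
  show "\<forall>\<^sub>F n in sequentially. \<forall>\<omega>\<in>space M. \<bar>V n \<omega> - c\<bar> \<le> \<bar>c\<bar> / 2 \<longrightarrow>
      T n \<omega> - U n \<omega> / c = R n \<omega> * (1 / V n \<omega> - 1 / c) + (1 / c) * R n \<omega> + U n \<omega> * (1 / V n \<omega> - 1 / c)"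
    using eq
  proof eventually_elim
    case (elim n)
    show ?case
    proof (intro ballI impI)
      fix \<omega> assume "\<omega> \<in> space M" "\<bar>V n \<omega> - c\<bar> \<le> \<bar>c\<bar> / 2"
      moreover from this(2) c have "V n \<omega> \<noteq> 0"
        by auto
      ultimately show "T n \<omega> - U n \<omega> / c = R n \<omega> * (1 / V n \<omega> - 1 / c) + (1 / c) * R n \<omega>
          + U n \<omega> * (1 / V n \<omega> - 1 / c)"
        using elim by (simp add: add_divide_distrib algebra_simps)
    qed
  qed
qed

section \<open>Weak convergence\<close>

lemma abs_integral_diff_le:
  fixes g :: "real \<Rightarrow> real"
  assumes [measurable]: "S \<in> borel_measurable M" "T \<in> borel_measurable M" "g \<in> borel_measurable borel"
    and bound: "\<And>x. \<bar>g x\<bar> \<le> B" and "\<epsilon> \<ge> 0"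
    and modulus: "\<And>x y. \<bar>y - x\<bar> \<le> \<delta> \<Longrightarrow> \<bar>g y - g x\<bar> \<le> \<epsilon>"
  shows "\<bar>(\<integral>\<omega>. g (T \<omega>) \<partial>M) - (\<integral>\<omega>. g (S \<omega>) \<partial>M)\<bar> \<le> \<epsilon> + 2 * B * prob {\<omega>\<in>space M. \<delta> < \<bar>T \<omega> - S \<omega>\<bar>}"
proof -
  define A where "A = {\<omega>\<in>space M. \<delta> < \<bar>T \<omega> - S \<omega>\<bar>}"
  have [measurable]: "A \<in> sets M"
    unfolding A_def by measurable
  then have int_A: "integrable M (indicator A :: 'a \<Rightarrow> real)"
    by (intro integrable_real_indicator) (auto simp: emeasure_eq_measure)
  have int: "integrable M (\<lambda>\<omega>. g (R \<omega>))" if [measurable]: "R \<in> borel_measurable M" for R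
    using bound by (intro integrable_const_bound[where B=B]) auto
  have pointwise: "\<bar>g (T \<omega>) - g (S \<omega>)\<bar> \<le> \<epsilon> + 2 * B * indicator A \<omega>" if "\<omega> \<in> space M" for \<omega>
  proof (cases "\<omega> \<in> A")
    case True
    then show ?thesis
      using bound[of "T \<omega>"] bound[of "S \<omega>"] \<open>\<epsilon> \<ge> 0\<close> by auto
  next
    case False
    with that modulus[of "T \<omega>" "S \<omega>"] show ?thesis
      by (auto simp: A_def)
  qed
  have "\<bar>(\<integral>\<omega>. g (T \<omega>) \<partial>M) - (\<integral>\<omega>. g (S \<omega>) \<partial>M)\<bar> \<le> (\<integral>\<omega>. \<bar>g (T \<omega>) - g (S \<omega>)\<bar> \<partial>M)"
    using integral_abs_bound[of M "\<lambda>\<omega>. g (T \<omega>) - g (S \<omega>)"] by (simp add: int)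
  also have "\<dots> \<le> (\<integral>\<omega>. \<epsilon> + 2 * B * indicator A \<omega> \<partial>M)"
    using pointwise by (intro integral_mono) (auto simp: int int_A)
  also have "\<dots> = \<epsilon> + 2 * B * prob A"
    using int_A by (simp add: prob_space)
  finally show ?thesis
    by (simp add: A_def)
qed

lemma integral_diff_tendsto_zero_if_vanishes:
  fixes g :: "real \<Rightarrow> real" and B :: real
  assumes [measurable]: "\<And>n. S n \<in> borel_measurable M" "\<And>n. T n \<in> borel_measurable M"
    and vanish: "vanishes_in_prob M (\<lambda>n \<omega>. T n \<omega> - S n \<omega>)"
    and g: "uniformly_continuous_on UNIV g" and bound: "\<And>x. \<bar>g x\<bar> \<le> B"
  shows "(\<lambda>n. (\<integral>\<omega>. g (T n \<omega>) \<partial>M) - (\<integral>\<omega>. g (S n \<omega>) \<partial>M)) \<longlonglongrightarrow> 0"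
proof (rule LIMSEQ_I)
  fix r :: real assume r: "r > 0"
  have [measurable]: "g \<in> borel_measurable borel"
    using g by (intro borel_measurable_continuous_onI uniformly_continuous_imp_continuous)
  obtain \<delta> where "\<delta> > 0" and \<delta>: "\<And>x y. dist y x < \<delta> \<Longrightarrow> dist (g y) (g x) < r / 2"
    using g r unfolding uniformly_continuous_on_def by (metis UNIV_I half_gt_zero)
  have modulus: "\<bar>g y - g x\<bar> \<le> r / 2" if "\<bar>y - x\<bar> \<le> \<delta> / 2" for x y
  proof -
    have "dist y x < \<delta>"
      using that \<open>\<delta> > 0\<close> by (simp add: dist_real_def)
    from \<delta>[OF this] show ?thesis
      by (simp add: dist_real_def)
  qed
  have B: "0 \<le> B"
    using bound[of 0] by linarith
  obtain N where N: "\<And>n. n \<ge> N \<Longrightarrow> prob {\<omega>\<in>space M. \<delta> / 2 < \<bar>T n \<omega> - S n \<omega>\<bar>} < r / (4 * (B + 1))"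
    using LIMSEQ_D[OF vanishes_in_prob_tendsto[OF vanish], of "\<delta> / 2" "r / (4 * (B + 1))"] \<open>\<delta> > 0\<close> r B
    by auto
  have "\<bar>(\<integral>\<omega>. g (T n \<omega>) \<partial>M) - (\<integral>\<omega>. g (S n \<omega>) \<partial>M)\<bar> < r" if "n \<ge> N" for n
  proof -
    have "2 * B * prob {\<omega>\<in>space M. \<delta> / 2 < \<bar>T n \<omega> - S n \<omega>\<bar>} \<le> 2 * B * (r / (4 * (B + 1)))"
      using N[OF that] B by (intro mult_left_mono) auto
    also have "\<dots> < r / 2"
      using r B by (simp add: field_simps)
    finally show ?thesis
      using abs_integral_diff_le[where S = "S n" and T = "T n" and g = g and \<epsilon> = "r / 2" and \<delta> = "\<delta> / 2",
          OF _ _ _ bound _ modulus] r by simp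
  qed
  then show "\<exists>N. \<forall>n\<ge>N. norm ((\<integral>\<omega>. g (T n \<omega>) \<partial>M) - (\<integral>\<omega>. g (S n \<omega>) \<partial>M) - 0) < r"
    by auto
qed

theorem slutsky:
  assumes [measurable]: "\<And>n. S n \<in> borel_measurable M" "\<And>n. T n \<in> borel_measurable M"
    and conv: "weak_conv_m (\<lambda>n. distr M borel (S n)) \<nu>" and \<nu>: "real_distribution \<nu>"
    and vanish: "vanishes_in_prob M (\<lambda>n \<omega>. T n \<omega> - S n \<omega>)"
  shows "weak_conv_m (\<lambda>n. distr M borel (T n)) \<nu>"
proof (rule integral_cts_step_conv_imp_weak_conv[OF _ \<nu>])
  fix x y :: real assume "x < y"
  then have step: "uniformly_continuous_on UNIV (cts_step x y)" "\<And>z. \<bar>cts_step x y z\<bar> \<le> 1"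
    by (auto simp: cts_step_uniformly_continuous cts_step_def)
  then have cont: "continuous_on UNIV (cts_step x y)"
    by (intro uniformly_continuous_imp_continuous)
  then have [measurable]: "cts_step x y \<in> borel_measurable borel"
    by (rule borel_measurable_continuous_onI)
  have "(\<lambda>n. integral\<^sup>L (distr M borel (S n)) (cts_step x y)) \<longlonglongrightarrow> integral\<^sup>L \<nu> (cts_step x y)"
    using step cont by (intro weak_conv_imp_integral_bdd_continuous_conv[OF _ \<nu> conv])
      (auto simp: continuous_on_eq_continuous_at)
  then have "(\<lambda>n. (\<integral>\<omega>. cts_step x y (S n \<omega>) \<partial>M)
      + ((\<integral>\<omega>. cts_step x y (T n \<omega>) \<partial>M) - (\<integral>\<omega>. cts_step x y (S n \<omega>) \<partial>M)))
      \<longlonglongrightarrow> integral\<^sup>L \<nu> (cts_step x y) + 0"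
    using step by (intro tendsto_add integral_diff_tendsto_zero_if_vanishes[OF _ _ vanish])
      (auto simp: integral_distr)
  then show "(\<lambda>n. integral\<^sup>L (distr M borel (T n)) (cts_step x y)) \<longlonglongrightarrow> integral\<^sup>L \<nu> (cts_step x y)"
    by (simp add: integral_distr)
qed simp

end

lemma weak_conv_m_distr_continuous:
  fixes f :: "real \<Rightarrow> real"
  assumes conv: "weak_conv_m \<mu> \<nu>" and \<mu>: "\<And>n. real_distribution (\<mu> n)" and \<nu>: "real_distribution \<nu>"
    and f: "\<And>x. isCont f x"
  shows "weak_conv_m (\<lambda>n. distr (\<mu> n) borel f) (distr \<nu> borel f)"
proof (rule integral_bdd_continuous_conv_imp_weak_conv)
  have f_meas: "f \<in> borel_measurable \<rho>" if "real_distribution \<rho>" for \<rho>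
  proof -
    interpret real_distribution \<rho> by fact
    show ?thesis
      using f by (subst measurable_cong_sets[OF events_eq_borel refl])
        (intro borel_measurable_continuous_onI continuous_at_imp_continuous_on ballI)
  qed
  have distr_rd: "real_distribution (distr \<rho> borel f)" if "real_distribution \<rho>" for \<rho>
    using f_meas[OF that] that by (intro prob_space.real_distribution_distr) (auto simp: real_distribution_def)
  then show "real_distribution (distr (\<mu> n) borel f)" "real_distribution (distr \<nu> borel f)" for n
    using \<mu> \<nu> by blast+
  fix g :: "real \<Rightarrow> real" assume g: "\<And>x. isCont g x" "\<And>x. \<bar>g x\<bar> \<le> 1"
  then have [measurable]: "g \<in> borel_measurable borel"
    by (intro borel_measurable_continuous_onI continuous_at_imp_continuous_on) auto
  have "(\<lambda>n. integral\<^sup>L (\<mu> n) (\<lambda>x. g (f x))) \<longlonglongrightarrow> integral\<^sup>L \<nu> (\<lambda>x. g (f x))"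
    using g(2) by (intro weak_conv_imp_integral_bdd_continuous_conv[OF \<mu> \<nu> conv isCont_o2[OF f g(1)], where B=1])
      simp
  then show "(\<lambda>n. integral\<^sup>L (distr (\<mu> n) borel f) g) \<longlonglongrightarrow> integral\<^sup>L (distr \<nu> borel f) g"
    using f_meas[OF \<nu>] f_meas[OF \<mu>] by (simp add: integral_distr)
qed

lemma real_distribution_normal_measure:
  assumes "v \<ge> 0"
  shows "real_distribution (normal_measure \<mu> v)"
  using assms unfolding normal_measure_def real_distribution_def real_distribution_axioms_def
  using prob_space_normal_density by (auto simp: prob_space_return)

lemma distr_normal_measure_scale:
  assumes "v \<ge> 0" and "c \<noteq> 0"
  shows "distr (normal_measure 0 v) borel (\<lambda>x. c * x) = normal_measure 0 (c\<^sup>2 * v)"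
proof (cases "v = 0")
  case True
  then show ?thesis
    by (simp add: normal_measure_def distr_return)
next
  case False
  with assms(1) have \<sigma>: "sqrt v > 0"
    by (simp add: order_less_le)
  interpret N: prob_space "density lborel (normal_density 0 (sqrt v))"
    using \<sigma> by (rule prob_space_normal_density)
  have "distributed (density lborel (normal_density 0 (sqrt v))) lborel (\<lambda>x. x) (normal_density 0 (sqrt v))"
    by (simp add: distributed_def distr_id2)
  then have "distributed (density lborel (normal_density 0 (sqrt v))) lborel (\<lambda>x. 0 + c * x)
      (normal_density (0 + c * 0) (\<bar>c\<bar> * sqrt v))"
    by (rule N.normal_density_affine[OF _ \<sigma> assms(2)])
  moreover have "\<bar>c\<bar> * sqrt v = sqrt (c\<^sup>2 * v)"
    by (simp add: real_sqrt_mult)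
  ultimately have "distr (normal_measure 0 v) lborel (\<lambda>x. c * x) = normal_measure 0 (c\<^sup>2 * v)"
    using False assms(2) by (simp add: normal_measure_def distributed_def)
  moreover have "distr (normal_measure 0 v) borel (\<lambda>x. c * x) = distr (normal_measure 0 v) lborel (\<lambda>x. c * x)"
    by (rule distr_cong) auto
  ultimately show ?thesis
    by simp
qed

lemma (in prob_space) weak_conv_m_return_zero:
  assumes "vanishes_in_prob M X"
  shows "weak_conv_m (\<lambda>n. distr M borel (X n)) (return borel 0)"
proof (rule slutsky[where S="\<lambda>n \<omega>. 0"])
  show "weak_conv_m (\<lambda>n. distr M borel (\<lambda>\<omega>. 0)) (return borel (0::real))"
    by (simp add: weak_conv_m_def weak_conv_def)
  show "real_distribution (return borel (0::real))"
    using real_distribution_normal_measure[of 0 0] by (simp add: normal_measure_def)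
qed (simp_all add: assms vanishes_in_prob_measurable[OF assms])

section \<open>Sums of centred i.i.d. variables\<close>

locale centered_iid = prob_space +
  fixes X :: "nat \<Rightarrow> 'a \<Rightarrow> real"
  assumes indep: "indep_vars (\<lambda>_. borel) X UNIV"
    and ident: "\<And>i. distr M borel (X i) = distr M borel (X 0)"
    and square_integrable: "integrable M (\<lambda>\<omega>. (X 0 \<omega>)\<^sup>2)"
    and mean_zero: "expectation (X 0) = 0"
begin

lemma X_measurable [measurable]: "X i \<in> borel_measurable M"
  using indep unfolding indep_vars_def2 by auto

lemma integral_comp_X:
  fixes g :: "real \<Rightarrow> real"
  assumes [measurable]: "g \<in> borel_measurable borel"
  shows "(\<integral>\<omega>. g (X i \<omega>) \<partial>M) = (\<integral>\<omega>. g (X 0 \<omega>) \<partial>M)"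
    and "integrable M (\<lambda>\<omega>. g (X i \<omega>)) \<longleftrightarrow> integrable M (\<lambda>\<omega>. g (X 0 \<omega>))"
  using ident[of i]
  by (metis X_measurable assms integral_distr, metis X_measurable assms integrable_distr_eq)

lemma square_integrable_X: "integrable M (\<lambda>\<omega>. (X i \<omega>)\<^sup>2)"
  using integral_comp_X(2)[of "\<lambda>x. x\<^sup>2" i] square_integrable by simp

lemma integrable_X: "integrable M (X i)"
  using square_integrable_X by (rule square_integrable_imp_integrable[rotated]) simp

lemma mean_zero_X: "expectation (X i) = 0"
  using integral_comp_X(1)[of "\<lambda>x. x" i] mean_zero by simp

lemma second_moment_X: "expectation (\<lambda>\<omega>. (X i \<omega>)\<^sup>2) = expectation (\<lambda>\<omega>. (X 0 \<omega>)\<^sup>2)"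
  using integral_comp_X(1)[of "\<lambda>x. x\<^sup>2" i] by simp

lemma expectation_X_mult_X:
  "expectation (\<lambda>\<omega>. X i \<omega> * X j \<omega>) = (if i = j then expectation (\<lambda>\<omega>. (X 0 \<omega>)\<^sup>2) else 0)"
proof (cases "i = j")
  case True
  then show ?thesis
    using second_moment_X[of j] by (simp add: power2_eq_square)
next
  case False
  have "indep_vars (\<lambda>_. borel) X {i, j}"
    by (rule indep_vars_subset[OF indep]) auto
  then have "expectation (\<lambda>\<omega>. \<Prod>k\<in>{i, j}. X k \<omega>) = (\<Prod>k\<in>{i, j}. expectation (X k))"
    by (intro indep_vars_lebesgue_integral) (auto simp: integrable_X)
  with False show ?thesis
    by (simp add: mean_zero_X)
qed

lemma integrable_X_mult_X: "integrable M (\<lambda>\<omega>. X i \<omega> * X j \<omega>)"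
proof (rule Bochner_Integration.integrable_bound)
  show "integrable M (\<lambda>\<omega>. (X i \<omega>)\<^sup>2 + (X j \<omega>)\<^sup>2)"
    by (intro Bochner_Integration.integrable_add square_integrable_X)
  have "\<bar>a * b\<bar> \<le> a\<^sup>2 + b\<^sup>2" for a b :: real
  proof -
    have "2 * (\<bar>a\<bar> * \<bar>b\<bar>) \<le> a\<^sup>2 + b\<^sup>2"
      using sum_squares_bound[of "\<bar>a\<bar>" "\<bar>b\<bar>"] by (simp add: mult.assoc)
    moreover have "0 \<le> \<bar>a\<bar> * \<bar>b\<bar>"
      by simp
    ultimately show ?thesis
      unfolding abs_mult by linarith
  qed
  then show "AE \<omega> in M. norm (X i \<omega> * X j \<omega>) \<le> norm ((X i \<omega>)\<^sup>2 + (X j \<omega>)\<^sup>2)"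
    by simp
qed measurable

lemma second_moment_sum:
  shows "integrable M (\<lambda>\<omega>. (\<Sum>i<n. X i \<omega>)\<^sup>2)"
    and "expectation (\<lambda>\<omega>. (\<Sum>i<n. X i \<omega>)\<^sup>2) = real n * expectation (\<lambda>\<omega>. (X 0 \<omega>)\<^sup>2)"
proof -
  have square_sum: "(\<lambda>\<omega>. (\<Sum>i<n. X i \<omega>)\<^sup>2) = (\<lambda>\<omega>. \<Sum>i<n. \<Sum>j<n. X i \<omega> * X j \<omega>)"
    by (simp add: power2_eq_square sum_product)
  show "integrable M (\<lambda>\<omega>. (\<Sum>i<n. X i \<omega>)\<^sup>2)"
    unfolding square_sum by (intro Bochner_Integration.integrable_sum integrable_X_mult_X)
  show "expectation (\<lambda>\<omega>. (\<Sum>i<n. X i \<omega>)\<^sup>2) = real n * expectation (\<lambda>\<omega>. (X 0 \<omega>)\<^sup>2)"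
    unfolding square_sum
    by (simp add: Bochner_Integration.integral_sum Bochner_Integration.integrable_sum
        integrable_X_mult_X expectation_X_mult_X)
qed

theorem sample_mean_vanishes: "vanishes_in_prob M (\<lambda>n \<omega>. (\<Sum>i<n. X i \<omega>) / real n)"
proof (rule vanishes_in_prob_second_moment)
  show "(\<lambda>\<omega>. (\<Sum>i<n. X i \<omega>) / real n) \<in> borel_measurable M" for n
    by measurable
  show "integrable M (\<lambda>\<omega>. ((\<Sum>i<n. X i \<omega>) / real n)\<^sup>2)" for n
    using second_moment_sum(1)[of n] by (simp add: power_divide)
  have "expectation (\<lambda>\<omega>. ((\<Sum>i<n. X i \<omega>) / real n)\<^sup>2) = expectation (\<lambda>\<omega>. (X 0 \<omega>)\<^sup>2) / real n" for n
    using second_moment_sum(2)[of n] by (simp add: power_divide power2_eq_square)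
  moreover have "(\<lambda>n. expectation (\<lambda>\<omega>. (X 0 \<omega>)\<^sup>2) / real n) \<longlonglongrightarrow> 0"
    by (rule tendsto_divide_0[OF tendsto_const filterlim_real_sequentially[THEN filterlim_at_top_imp_at_infinity]])
  ultimately show "(\<lambda>n. expectation (\<lambda>\<omega>. ((\<Sum>i<n. X i \<omega>) / real n)\<^sup>2)) \<longlonglongrightarrow> 0"
    by simp
qed

lemma normalized_sum_second_moment:
  shows "integrable M (\<lambda>\<omega>. ((\<Sum>i<n. X i \<omega>) / sqrt (real n))\<^sup>2)"
    and "expectation (\<lambda>\<omega>. ((\<Sum>i<n. X i \<omega>) / sqrt (real n))\<^sup>2) \<le> expectation (\<lambda>\<omega>. (X 0 \<omega>)\<^sup>2)"
proof -
  show "integrable M (\<lambda>\<omega>. ((\<Sum>i<n. X i \<omega>) / sqrt (real n))\<^sup>2)"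
    using second_moment_sum(1)[of n] by (simp add: power_divide)
  have "expectation (\<lambda>\<omega>. (X 0 \<omega>)\<^sup>2) \<ge> 0"
    by simp
  then show "expectation (\<lambda>\<omega>. ((\<Sum>i<n. X i \<omega>) / sqrt (real n))\<^sup>2) \<le> expectation (\<lambda>\<omega>. (X 0 \<omega>)\<^sup>2)"
    using second_moment_sum(2)[of n] by (cases "n = 0") (simp_all add: power_divide)
qed

theorem normalized_sum_asymptotically_normal:
  "weak_conv_m (\<lambda>n. distr M borel (\<lambda>\<omega>. (\<Sum>i<n. X i \<omega>) / sqrt (real n)))
     (normal_measure 0 (expectation (\<lambda>\<omega>. (X 0 \<omega>)\<^sup>2)))"
proof (cases "expectation (\<lambda>\<omega>. (X 0 \<omega>)\<^sup>2) = 0")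
  \<comment> \<open>the library's \<open>central_limit_theorem_zero_mean\<close> needs a positive variance\<close>
  case True
  have "vanishes_in_prob M (\<lambda>n \<omega>. (\<Sum>i<n. X i \<omega>) / sqrt (real n))"
  proof (rule vanishes_in_prob_second_moment)
    have "expectation (\<lambda>\<omega>. ((\<Sum>i<n. X i \<omega>) / sqrt (real n))\<^sup>2) = 0" for n
      using normalized_sum_second_moment(2)[of n] True by (simp add: antisym)
    then show "(\<lambda>n. expectation (\<lambda>\<omega>. ((\<Sum>i<n. X i \<omega>) / sqrt (real n))\<^sup>2)) \<longlonglongrightarrow> 0"
      by simp
  qed (simp_all add: normalized_sum_second_moment(1))
  then show ?thesis
    using True by (simp add: normal_measure_def weak_conv_m_return_zero)
next
  case False
  define \<sigma> where "\<sigma> = sqrt (expectation (\<lambda>\<omega>. (X 0 \<omega>)\<^sup>2))"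
  have \<sigma>: "\<sigma> > 0" "\<sigma>\<^sup>2 = expectation (\<lambda>\<omega>. (X 0 \<omega>)\<^sup>2)"
    using False by (simp_all add: \<sigma>_def order_less_le)
  have "std_normal_distribution = normal_measure 0 1"
    by (simp add: normal_measure_def)
  moreover have "weak_conv_m (\<lambda>n. distr M borel (\<lambda>\<omega>. (\<Sum>i<n. X i \<omega>) / sqrt (real n * \<sigma>\<^sup>2)))
      std_normal_distribution"
  proof (rule central_limit_theorem_zero_mean[OF indep mean_zero_X \<sigma>(1) square_integrable_X _ ident])
    show "variance (X n) = \<sigma>\<^sup>2" for n
      using \<sigma>(2) second_moment_X[of n] by (simp add: mean_zero_X)
  qed
  ultimately have "weak_conv_m
      (\<lambda>n. distr (distr M borel (\<lambda>\<omega>. (\<Sum>i<n. X i \<omega>) / sqrt (real n * \<sigma>\<^sup>2))) borel (\<lambda>x. \<sigma> * x))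
      (distr (normal_measure 0 1) borel (\<lambda>x. \<sigma> * x))"
    by (intro weak_conv_m_distr_continuous[OF _ _ real_distribution_normal_measure]) simp_all
  moreover have "\<sigma> * ((\<Sum>i<n. X i \<omega>) / sqrt (real n * \<sigma>\<^sup>2)) = (\<Sum>i<n. X i \<omega>) / sqrt (real n)" for n \<omega>
    using \<sigma>(1) by (simp add: real_sqrt_mult)
  ultimately show ?thesis
    using \<sigma> by (simp add: distr_distr comp_def distr_normal_measure_scale)
qed

end

section \<open>Sample cross-covariances\<close>

definition centered_cross_sum :: "nat \<Rightarrow> (nat \<Rightarrow> real) \<Rightarrow> (nat \<Rightarrow> real) \<Rightarrow> real" where
  "centered_cross_sum n a b = (\<Sum>i<n. (a i - smean n a) * (b i - smean n b))"

lemma ridge_iv_eq_centered_cross_sum: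
  "ridge_iv n lam Y D Z = centered_cross_sum n Y Z / (centered_cross_sum n D Z + lam)"
  by (simp add: ridge_iv_def centered_cross_sum_def)

lemma smean_affine:
  assumes "n > 0"
  shows "smean n (\<lambda>i. a + b * f i + g i) = a + b * smean n f + smean n g"
  using assms by (simp add: smean_def sum.distrib sum_distrib_left[symmetric] field_simps)

lemma smean_diff_const:
  assumes "n > 0"
  shows "smean n (\<lambda>i. f i - m) = smean n f - m"
  using assms by (simp add: smean_def sum_subtractf diff_divide_distrib)

lemma centered_cross_sum_eq:
  "centered_cross_sum n a b = (\<Sum>i<n. a i * b i) - (\<Sum>i<n. a i) * (\<Sum>i<n. b i) / real n"
proof (cases "n = 0")
  case False
  have "centered_cross_sum n a b
      = (\<Sum>i<n. a i * b i) - smean n b * (\<Sum>i<n. a i) - smean n a * (\<Sum>i<n. b i)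
        + real n * (smean n a * smean n b)"
    unfolding centered_cross_sum_def
    by (simp add: algebra_simps sum.distrib sum_subtractf sum_distrib_left)
  also have "\<dots> = (\<Sum>i<n. a i * b i) - (\<Sum>i<n. a i) * (\<Sum>i<n. b i) / real n"
    using False by (simp add: smean_def field_simps)
  finally show ?thesis .
qed (simp add: centered_cross_sum_def)

lemma centered_cross_sum_commute: "centered_cross_sum n a b = centered_cross_sum n b a"
  by (simp add: centered_cross_sum_eq mult.commute)

lemma centered_cross_sum_affine_left:
  "centered_cross_sum n (\<lambda>i. a + b * f i + g i) c = b * centered_cross_sum n f c + centered_cross_sum n g c"
proof (cases "n > 0")
  case True
  then have "centered_cross_sum n (\<lambda>i. a + b * f i + g i) c
      = (\<Sum>i<n. b * ((f i - smean n f) * (c i - smean n c)) + (g i - smean n g) * (c i - smean n c))"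
    unfolding centered_cross_sum_def smean_affine[OF True]
    by (intro sum.cong) (auto simp: algebra_simps)
  then show ?thesis
    by (simp add: centered_cross_sum_def sum.distrib sum_distrib_left)
qed (simp add: centered_cross_sum_def)

lemma centered_cross_sum_diff_const_right:
  "centered_cross_sum n a (\<lambda>i. b i - m) = centered_cross_sum n a b"
  by (cases "n = 0") (simp_all add: centered_cross_sum_def smean_diff_const)

lemma centered_cross_sum_measurable [measurable]:
  assumes [measurable]: "\<And>i. a i \<in> borel_measurable M" "\<And>i. b i \<in> borel_measurable M"
  shows "(\<lambda>\<omega>. centered_cross_sum n (\<lambda>i. a i \<omega>) (\<lambda>i. b i \<omega>)) \<in> borel_measurable M"
  unfolding centered_cross_sum_def smean_def by measurable

lemma centered_cross_sum_div_eq: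
  "centered_cross_sum n a b / real n
    = (\<Sum>i<n. a i * b i) / real n - (\<Sum>i<n. a i) / real n * ((\<Sum>i<n. b i) / real n)"
  by (simp add: centered_cross_sum_eq diff_divide_distrib)

lemma centered_cross_sum_self_div_eq:
  assumes "n > 0"
  shows "centered_cross_sum n a a / real n - 1
    = (\<Sum>i<n. (a i)\<^sup>2 - 1) / real n - (\<Sum>i<n. a i) / real n * ((\<Sum>i<n. a i) / real n)"
proof -
  have "(\<Sum>i<n. (a i)\<^sup>2 - 1) = (\<Sum>i<n. a i * a i) - real n"
    by (simp add: sum_subtractf power2_eq_square)
  with assms show ?thesis
    by (simp add: centered_cross_sum_div_eq diff_divide_distrib)
qed

lemma centered_cross_sum_div_sqrt_eq:
  "centered_cross_sum n a b / sqrt (real n) - (\<Sum>i<n. a i * b i) / sqrt (real n)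
    = - ((\<Sum>i<n. a i) / sqrt (real n) * ((\<Sum>i<n. b i) / real n))"
  by (simp add: centered_cross_sum_eq diff_divide_distrib)

lemma ridge_iv_minus_slope:
  assumes "centered_cross_sum n D Z + lam \<noteq> 0"
  shows "ridge_iv n lam (\<lambda>i. b0 + b1 * D i + e i) D Z - b1
    = (centered_cross_sum n e Z - b1 * lam) / (centered_cross_sum n D Z + lam)"
  unfolding ridge_iv_eq_centered_cross_sum centered_cross_sum_affine_left
  using assms by (simp add: field_simps)

section \<open>The instrumental-variables model\<close>

lemma tendsto_div_real_if_div_sqrt:
  assumes "(\<lambda>n. a n / sqrt (real n)) \<longlonglongrightarrow> 0"
  shows "(\<lambda>n. a n / real n) \<longlonglongrightarrow> 0"
proof -
  have "(\<lambda>n. sqrt (1 / real n)) \<longlonglongrightarrow> sqrt 0"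
    by (intro tendsto_real_sqrt lim_inverse_n')
  then have "(\<lambda>n. a n / sqrt (real n) * (1 / sqrt (real n))) \<longlonglongrightarrow> 0 * 0"
    using assms by (intro tendsto_mult) (simp_all add: real_sqrt_divide)
  then show ?thesis
    by simp
qed

lemma square_le_one_plus_fourth_power: "(x::real)\<^sup>2 \<le> 1 + x ^ 4"
proof -
  have "2 * x\<^sup>2 \<le> 1 + x ^ 4"
    using zero_le_power2[of "x\<^sup>2 - 1"] by (simp add: power2_eq_square power4_eq_xxxx algebra_simps)
  then show ?thesis
    using zero_le_power2[of x] by linarith
qed

lemma fourth_power_diff_le: "((a::real) - b) ^ 4 \<le> 8 * a ^ 4 + 8 * b ^ 4"
proof -
  have "(a - b)\<^sup>2 \<le> 2 * (a\<^sup>2 + b\<^sup>2)"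
    using zero_le_power2[of "a + b"] by (simp add: power2_eq_square algebra_simps)
  then have "((a - b)\<^sup>2)\<^sup>2 \<le> (2 * (a\<^sup>2 + b\<^sup>2))\<^sup>2"
    by (intro power_mono) auto
  also have "\<dots> \<le> 8 * a ^ 4 + 8 * b ^ 4"
    using zero_le_power2[of "a\<^sup>2 - b\<^sup>2"] by (simp add: power2_eq_square power4_eq_xxxx algebra_simps)
  finally show ?thesis
    by simp
qed

lemma fst_snd_borel_measurable:
  "(fst :: real \<times> real \<Rightarrow> real) \<in> borel_measurable borel"
  "(snd :: real \<times> real \<Rightarrow> real) \<in> borel_measurable borel"
  using measurable_fst[of "borel :: real measure" "borel :: real measure"]
    measurable_snd[of "borel :: real measure" "borel :: real measure"]
  by (simp_all add: borel_prod)

locale iv_model = prob_space M for M :: "'a measure" +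
  fixes eps eta Z :: "nat \<Rightarrow> 'a \<Rightarrow> real" and sig_e2 :: real
  assumes meas_eps [measurable]: "\<And>i. eps i \<in> borel_measurable M"
    and meas_eta [measurable]: "\<And>i. eta i \<in> borel_measurable M"
    and meas_Z [measurable]: "\<And>i. Z i \<in> borel_measurable M"
    and indep: "indep_vars (\<lambda>_. borel) (\<lambda>i \<omega>. (eps i \<omega>, eta i \<omega>, Z i \<omega>)) UNIV"
    and indep_Z_err: "\<And>i (A :: (real \<times> real) set) (B :: real set). A \<in> sets borel \<Longrightarrow> B \<in> sets borel \<Longrightarrow>
         measure M {\<omega> \<in> space M. (eps i \<omega>, eta i \<omega>) \<in> A \<and> Z i \<omega> \<in> B}
         = measure M {\<omega> \<in> space M. (eps i \<omega>, eta i \<omega>) \<in> A} * measure M {\<omega> \<in> space M. Z i \<omega> \<in> B}"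
    and ident_err: "\<And>i. distr M borel (\<lambda>\<omega>. (eps i \<omega>, eta i \<omega>)) = distr M borel (\<lambda>\<omega>. (eps 0 \<omega>, eta 0 \<omega>))"
    and ident_Z: "\<And>i. distr M borel (Z i) = distr M borel (Z 0)"
    and int_e2: "integrable M (\<lambda>\<omega>. (eps 0 \<omega>)\<^sup>2)"
    and int_h2: "integrable M (\<lambda>\<omega>. (eta 0 \<omega>)\<^sup>2)"
    and mean_e: "expectation (eps 0) = 0"
    and mean_h: "expectation (eta 0) = 0"
    and var_e: "expectation (\<lambda>\<omega>. (eps 0 \<omega>)\<^sup>2) = sig_e2"
    and int_Z4: "integrable M (\<lambda>\<omega>. (Z 0 \<omega>) ^ 4)"
    and var_Z: "expectation (\<lambda>\<omega>. (Z 0 \<omega> - expectation (Z 0))\<^sup>2) = 1"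
begin

text \<open>Observations are grouped as \<open>((\<epsilon>\<^sub>i, \<eta>\<^sub>i), Z\<^sub>i)\<close> to match the factorisation in \<open>indep_Z_err\<close>.\<close>

definition obs :: "nat \<Rightarrow> 'a \<Rightarrow> (real \<times> real) \<times> real" where
  "obs i \<omega> = ((eps i \<omega>, eta i \<omega>), Z i \<omega>)"

definition mu :: real where
  "mu = expectation (Z 0)"

lemma obs_measurable [measurable]: "obs i \<in> measurable M (borel \<Otimes>\<^sub>M borel)"
  unfolding obs_def by measurable

lemma obs_borel_measurable [measurable]: "obs i \<in> borel_measurable M"
  using obs_measurable by (simp add: borel_prod)

lemma indep_obs: "indep_vars (\<lambda>_. borel) obs UNIV"
proof -
  have "(\<lambda>x :: real \<times> real \<times> real. ((fst x, fst (snd x)), snd (snd x))) \<in> borel_measurable borel"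
    by (intro borel_measurable_continuous_onI continuous_intros)
  from indep_vars_compose2[OF indep this] show ?thesis
    by (simp add: obs_def[abs_def])
qed

lemma distr_obs_eq_product:
  "distr M (borel \<Otimes>\<^sub>M borel) (obs i) = distr M borel (\<lambda>\<omega>. (eps i \<omega>, eta i \<omega>)) \<Otimes>\<^sub>M distr M borel (Z i)"
proof (rule pair_measure_eqI[symmetric])
  show "sigma_finite_measure (distr M borel (\<lambda>\<omega>. (eps i \<omega>, eta i \<omega>)))" "sigma_finite_measure (distr M borel (Z i))"
    by (simp_all add: prob_space_imp_sigma_finite prob_space_distr)
  fix A B assume "A \<in> sets (distr M borel (\<lambda>\<omega>. (eps i \<omega>, eta i \<omega>)))" "B \<in> sets (distr M borel (Z i))"
  then have [measurable]: "A \<in> sets borel" "B \<in> sets borel"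
    by auto
  have "emeasure (distr M (borel \<Otimes>\<^sub>M borel) (obs i)) (A \<times> B)
      = measure M {\<omega> \<in> space M. (eps i \<omega>, eta i \<omega>) \<in> A \<and> Z i \<omega> \<in> B}"
    by (simp add: emeasure_distr emeasure_eq_measure obs_def vimage_def Int_def conj_commute)
  also have "\<dots> = ennreal (measure M {\<omega> \<in> space M. (eps i \<omega>, eta i \<omega>) \<in> A})
      * ennreal (measure M {\<omega> \<in> space M. Z i \<omega> \<in> B})"
    by (simp add: indep_Z_err ennreal_mult)
  also have "\<dots> = emeasure (distr M borel (\<lambda>\<omega>. (eps i \<omega>, eta i \<omega>))) A * emeasure (distr M borel (Z i)) B"
    by (simp add: emeasure_distr emeasure_eq_measure vimage_def Int_def conj_commute)
  finally show "emeasure (distr M borel (\<lambda>\<omega>. (eps i \<omega>, eta i \<omega>))) A * emeasure (distr M borel (Z i)) B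
      = emeasure (distr M (borel \<Otimes>\<^sub>M borel) (obs i)) (A \<times> B)"
    by simp
qed simp

lemma distr_obs_eq: "distr M borel (obs i) = distr M borel (obs 0)"
proof -
  have "distr M borel (obs j) = distr M borel (\<lambda>\<omega>. (eps j \<omega>, eta j \<omega>)) \<Otimes>\<^sub>M distr M borel (Z j)" for j
    using distr_obs_eq_product[of j] by (simp add: borel_prod)
  then show ?thesis
    by (simp add: ident_err[of i] ident_Z[of i])
qed

lemma indep_errors_instrument:
  fixes f :: "real \<times> real \<Rightarrow> real" and h :: "real \<Rightarrow> real"
  assumes [measurable]: "f \<in> borel_measurable borel" "h \<in> borel_measurable borel"
  shows "indep_var borel (\<lambda>\<omega>. f (eps i \<omega>, eta i \<omega>)) borel (\<lambda>\<omega>. h (Z i \<omega>))"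
proof (subst indep_var_distribution_eq, intro conjI)
  have "distr M borel (\<lambda>\<omega>. f (eps i \<omega>, eta i \<omega>)) \<Otimes>\<^sub>M distr M borel (\<lambda>\<omega>. h (Z i \<omega>))
      = distr (distr M borel (\<lambda>\<omega>. (eps i \<omega>, eta i \<omega>))) borel f \<Otimes>\<^sub>M distr (distr M borel (Z i)) borel h"
    by (simp add: distr_distr comp_def)
  also have "\<dots> = distr (distr M (borel \<Otimes>\<^sub>M borel) (obs i)) (borel \<Otimes>\<^sub>M borel) (\<lambda>(x, z). (f x, h z))"
    unfolding distr_obs_eq_product
  proof (intro pair_measure_distr prob_space_imp_sigma_finite)
    show "prob_space (distr (distr M borel (Z i)) borel h)"
      by (simp add: distr_distr comp_def prob_space_distr)
  qed simp_all
  also have "\<dots> = distr M (borel \<Otimes>\<^sub>M borel) (\<lambda>\<omega>. (f (eps i \<omega>, eta i \<omega>), h (Z i \<omega>)))"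
    by (simp add: distr_distr comp_def obs_def)
  finally show "distr M borel (\<lambda>\<omega>. f (eps i \<omega>, eta i \<omega>)) \<Otimes>\<^sub>M distr M borel (\<lambda>\<omega>. h (Z i \<omega>))
      = distr M (borel \<Otimes>\<^sub>M borel) (\<lambda>\<omega>. (f (eps i \<omega>, eta i \<omega>), h (Z i \<omega>)))" .
qed simp_all

lemma expectation_errors_times_instrument:
  fixes f :: "real \<times> real \<Rightarrow> real" and h :: "real \<Rightarrow> real"
  assumes [measurable]: "f \<in> borel_measurable borel" "h \<in> borel_measurable borel"
    and "integrable M (\<lambda>\<omega>. f (eps 0 \<omega>, eta 0 \<omega>))" and "integrable M (\<lambda>\<omega>. h (Z 0 \<omega>))"
  shows "integrable M (\<lambda>\<omega>. f (eps 0 \<omega>, eta 0 \<omega>) * h (Z 0 \<omega>))"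
    and "expectation (\<lambda>\<omega>. f (eps 0 \<omega>, eta 0 \<omega>) * h (Z 0 \<omega>))
      = expectation (\<lambda>\<omega>. f (eps 0 \<omega>, eta 0 \<omega>)) * expectation (\<lambda>\<omega>. h (Z 0 \<omega>))"
  using indep_var_integrable indep_var_lebesgue_integral indep_errors_instrument[OF assms(1,2), of 0] assms(3,4)
  by blast+

lemma centered_iid_obs:
  fixes g :: "(real \<times> real) \<times> real \<Rightarrow> real"
  assumes [measurable]: "g \<in> borel_measurable borel"
    and "integrable M (\<lambda>\<omega>. (g (obs 0 \<omega>))\<^sup>2)" and "expectation (\<lambda>\<omega>. g (obs 0 \<omega>)) = 0"
  shows "centered_iid M (\<lambda>i \<omega>. g (obs i \<omega>))"
proof
  show "indep_vars (\<lambda>_. borel) (\<lambda>i \<omega>. g (obs i \<omega>)) UNIV"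
    by (rule indep_vars_compose2[OF indep_obs]) simp
  have "distr M borel (\<lambda>\<omega>. g (obs i \<omega>)) = distr (distr M borel (obs i)) borel g" for i
    by (subst distr_distr) (auto simp: comp_def borel_prod)
  then show "distr M borel (\<lambda>\<omega>. g (obs i \<omega>)) = distr M borel (\<lambda>\<omega>. g (obs 0 \<omega>))" for i
    by (simp add: distr_obs_eq[of i])
qed (use assms in auto)

lemma instrument_moments:
  shows "integrable M (\<lambda>\<omega>. (Z 0 \<omega> - mu)\<^sup>2)"
    and "expectation (\<lambda>\<omega>. Z 0 \<omega> - mu) = 0"
    and "expectation (\<lambda>\<omega>. (Z 0 \<omega> - mu)\<^sup>2) = 1"
    and "integrable M (\<lambda>\<omega>. ((Z 0 \<omega> - mu)\<^sup>2 - 1)\<^sup>2)"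
    and "expectation (\<lambda>\<omega>. (Z 0 \<omega> - mu)\<^sup>2 - 1) = 0"
proof -
  have dominated: "integrable M g"
    if "integrable M f" "g \<in> borel_measurable M" "\<And>\<omega>. \<bar>g \<omega>\<bar> \<le> f \<omega>" for f g :: "'a \<Rightarrow> real"
  proof (rule Bochner_Integration.integrable_bound[OF that(1,2)])
    have "\<bar>g \<omega>\<bar> \<le> \<bar>f \<omega>\<bar>" for \<omega>
      using that(3)[of \<omega>] abs_ge_self[of "f \<omega>"] by linarith
    then show "AE \<omega> in M. norm (g \<omega>) \<le> norm (f \<omega>)"
      by simp
  qed
  have "integrable M (\<lambda>\<omega>. (Z 0 \<omega>)\<^sup>2)"
    by (rule dominated[of "\<lambda>\<omega>. 1 + (Z 0 \<omega>) ^ 4"]) (simp_all add: int_Z4 square_le_one_plus_fourth_power)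
  moreover from this have "integrable M (Z 0)"
    by (rule square_integrable_imp_integrable[rotated]) simp
  ultimately show sq: "integrable M (\<lambda>\<omega>. (Z 0 \<omega> - mu)\<^sup>2)"
    by (simp add: power2_diff)
  show "expectation (\<lambda>\<omega>. Z 0 \<omega> - mu) = 0"
    using \<open>integrable M (Z 0)\<close> by (simp add: mu_def prob_space)
  show var: "expectation (\<lambda>\<omega>. (Z 0 \<omega> - mu)\<^sup>2) = 1"
    using var_Z by (simp add: mu_def)
  have "integrable M (\<lambda>\<omega>. (Z 0 \<omega> - mu) ^ 4)"
    by (rule dominated[of "\<lambda>\<omega>. 8 * (Z 0 \<omega>) ^ 4 + 8 * mu ^ 4"]) (simp_all add: int_Z4 fourth_power_diff_le)
  moreover have "((Z 0 \<omega> - mu)\<^sup>2 - 1)\<^sup>2 = (Z 0 \<omega> - mu) ^ 4 - 2 * (Z 0 \<omega> - mu)\<^sup>2 + 1" for \<omega>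
    by (simp add: power2_eq_square power4_eq_xxxx algebra_simps)
  ultimately show "integrable M (\<lambda>\<omega>. ((Z 0 \<omega> - mu)\<^sup>2 - 1)\<^sup>2)"
    using sq by simp
  show "expectation (\<lambda>\<omega>. (Z 0 \<omega> - mu)\<^sup>2 - 1) = 0"
    using sq var by (simp add: prob_space)
qed

lemma error_times_instrument_moments:
  fixes f :: "real \<times> real \<Rightarrow> real"
  assumes [measurable]: "f \<in> borel_measurable borel"
    and sq: "integrable M (\<lambda>\<omega>. (f (eps 0 \<omega>, eta 0 \<omega>))\<^sup>2)"
    and mean: "expectation (\<lambda>\<omega>. f (eps 0 \<omega>, eta 0 \<omega>)) = 0"
  shows "integrable M (\<lambda>\<omega>. (f (eps 0 \<omega>, eta 0 \<omega>) * (Z 0 \<omega> - mu))\<^sup>2)"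
    and "expectation (\<lambda>\<omega>. (f (eps 0 \<omega>, eta 0 \<omega>) * (Z 0 \<omega> - mu))\<^sup>2)
      = expectation (\<lambda>\<omega>. (f (eps 0 \<omega>, eta 0 \<omega>))\<^sup>2)"
    and "expectation (\<lambda>\<omega>. f (eps 0 \<omega>, eta 0 \<omega>) * (Z 0 \<omega> - mu)) = 0"
proof -
  have sq_meas: "(\<lambda>x. (f x)\<^sup>2) \<in> borel_measurable borel" "(\<lambda>z::real. (z - mu)\<^sup>2) \<in> borel_measurable borel"
    by simp_all
  have centre_meas: "(\<lambda>z::real. z - mu) \<in> borel_measurable borel"
    by simp
  have "integrable M (\<lambda>\<omega>. f (eps 0 \<omega>, eta 0 \<omega>))" "integrable M (\<lambda>\<omega>. Z 0 \<omega> - mu)"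
    by (rule square_integrable_imp_integrable[OF _ sq], measurable,
        rule square_integrable_imp_integrable[OF _ instrument_moments(1)], measurable)
  note square = expectation_errors_times_instrument[OF sq_meas sq instrument_moments(1)]
    and plain = expectation_errors_times_instrument[OF assms(1) centre_meas this]
  show "integrable M (\<lambda>\<omega>. (f (eps 0 \<omega>, eta 0 \<omega>) * (Z 0 \<omega> - mu))\<^sup>2)"
    using square(1) by (simp add: power_mult_distrib)
  show "expectation (\<lambda>\<omega>. (f (eps 0 \<omega>, eta 0 \<omega>) * (Z 0 \<omega> - mu))\<^sup>2)
      = expectation (\<lambda>\<omega>. (f (eps 0 \<omega>, eta 0 \<omega>))\<^sup>2)"
    using square(2) by (simp add: power_mult_distrib instrument_moments(3))
  show "expectation (\<lambda>\<omega>. f (eps 0 \<omega>, eta 0 \<omega>) * (Z 0 \<omega> - mu)) = 0"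
    using plain(2) by (simp add: mean)
qed

lemma sig_e2_nonneg: "sig_e2 \<ge> 0"
  using var_e by (metis integral_nonneg_AE AE_I2 zero_le_power2)

lemma score_variance: "expectation (\<lambda>\<omega>. (eps 0 \<omega> * (Z 0 \<omega> - mu))\<^sup>2) = sig_e2"
  using error_times_instrument_moments(2)[OF fst_snd_borel_measurable(1)] int_e2 mean_e var_e by simp

lemma centered_iid_families:
  shows "centered_iid M (\<lambda>i \<omega>. Z i \<omega> - mu)"
    and "centered_iid M (\<lambda>i \<omega>. (Z i \<omega> - mu)\<^sup>2 - 1)"
    and "centered_iid M eps"
    and "centered_iid M eta"
    and "centered_iid M (\<lambda>i \<omega>. eps i \<omega> * (Z i \<omega> - mu))"
    and "centered_iid M (\<lambda>i \<omega>. eta i \<omega> * (Z i \<omega> - mu))"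
proof -
  have meas: "(\<lambda>x::(real \<times> real) \<times> real. snd x - mu) \<in> borel_measurable borel"
    "(\<lambda>x::(real \<times> real) \<times> real. (snd x - mu)\<^sup>2 - 1) \<in> borel_measurable borel"
    "(\<lambda>x::(real \<times> real) \<times> real. fst (fst x)) \<in> borel_measurable borel"
    "(\<lambda>x::(real \<times> real) \<times> real. snd (fst x)) \<in> borel_measurable borel"
    "(\<lambda>x::(real \<times> real) \<times> real. fst (fst x) * (snd x - mu)) \<in> borel_measurable borel"
    "(\<lambda>x::(real \<times> real) \<times> real. snd (fst x) * (snd x - mu)) \<in> borel_measurable borel"
    by (intro borel_measurable_continuous_onI continuous_intros)+
  show
    "centered_iid M (\<lambda>i \<omega>. Z i \<omega> - mu)"
    "centered_iid M (\<lambda>i \<omega>. (Z i \<omega> - mu)\<^sup>2 - 1)"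
    "centered_iid M eps"
    "centered_iid M eta"
    "centered_iid M (\<lambda>i \<omega>. eps i \<omega> * (Z i \<omega> - mu))"
    "centered_iid M (\<lambda>i \<omega>. eta i \<omega> * (Z i \<omega> - mu))"
    using meas[THEN centered_iid_obs] instrument_moments
      error_times_instrument_moments[OF fst_snd_borel_measurable(1)]
      error_times_instrument_moments[OF fst_snd_borel_measurable(2)]
      int_e2 int_h2 mean_e mean_h
    by (simp_all add: obs_def)
qed

lemma sample_variance_consistent:
  "vanishes_in_prob M (\<lambda>n \<omega>. centered_cross_sum n (\<lambda>i. Z i \<omega>) (\<lambda>i. Z i \<omega>) / real n - 1)"
proof (rule vanishes_in_prob_cong_eventually)
  show "vanishes_in_prob M (\<lambda>n \<omega>. (\<Sum>i<n. (Z i \<omega> - mu)\<^sup>2 - 1) / real n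
      - (\<Sum>i<n. Z i \<omega> - mu) / real n * ((\<Sum>i<n. Z i \<omega> - mu) / real n))"
    using centered_iid_families(1,2)[THEN centered_iid.sample_mean_vanishes]
    by (intro vanishes_in_prob_diff vanishes_in_prob_mult)
  have eq: "centered_cross_sum n (\<lambda>i. Z i \<omega>) (\<lambda>i. Z i \<omega>) / real n - 1
      = (\<Sum>i<n. (Z i \<omega> - mu)\<^sup>2 - 1) / real n - (\<Sum>i<n. Z i \<omega> - mu) / real n * ((\<Sum>i<n. Z i \<omega> - mu) / real n)"
    if "n > 0" for n \<omega>
  proof -
    have "centered_cross_sum n (\<lambda>i. Z i \<omega>) (\<lambda>i. Z i \<omega>) = centered_cross_sum n (\<lambda>i. Z i \<omega>) (\<lambda>i. Z i \<omega> - mu)"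
      by (rule centered_cross_sum_diff_const_right[symmetric])
    also have "\<dots> = centered_cross_sum n (\<lambda>i. Z i \<omega> - mu) (\<lambda>i. Z i \<omega> - mu)"
      by (subst (1 2) centered_cross_sum_commute) (rule centered_cross_sum_diff_const_right[symmetric])
    finally show ?thesis
      using centered_cross_sum_self_div_eq[OF that, of "\<lambda>i. Z i \<omega> - mu"] by simp
  qed
  \<comment> \<open>only eventually: at \<open>n = 0\<close> the left-hand side is \<open>-1\<close>\<close>
  show "\<forall>\<^sub>F n in sequentially. \<forall>\<omega>\<in>space M. centered_cross_sum n (\<lambda>i. Z i \<omega>) (\<lambda>i. Z i \<omega>) / real n - 1
      = (\<Sum>i<n. (Z i \<omega> - mu)\<^sup>2 - 1) / real n - (\<Sum>i<n. Z i \<omega> - mu) / real n * ((\<Sum>i<n. Z i \<omega> - mu) / real n)"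
    using eventually_gt_at_top[of 0] by eventually_elim (simp add: eq)
qed measurable

lemma sample_covariance_consistent:
  "vanishes_in_prob M (\<lambda>n \<omega>. centered_cross_sum n (\<lambda>i. eta i \<omega>) (\<lambda>i. Z i \<omega>) / real n)"
proof -
  have "vanishes_in_prob M (\<lambda>n \<omega>. (\<Sum>i<n. eta i \<omega> * (Z i \<omega> - mu)) / real n
      - (\<Sum>i<n. eta i \<omega>) / real n * ((\<Sum>i<n. Z i \<omega> - mu) / real n))"
    using centered_iid_families(1,4,6)[THEN centered_iid.sample_mean_vanishes]
    by (intro vanishes_in_prob_diff vanishes_in_prob_mult)
  moreover have "centered_cross_sum n (\<lambda>i. eta i \<omega>) (\<lambda>i. Z i \<omega>) / real n
      = (\<Sum>i<n. eta i \<omega> * (Z i \<omega> - mu)) / real n - (\<Sum>i<n. eta i \<omega>) / real n * ((\<Sum>i<n. Z i \<omega> - mu) / real n)"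
    for n \<omega>
    by (subst centered_cross_sum_diff_const_right[of n _ _ mu, symmetric]) (rule centered_cross_sum_div_eq)
  ultimately show ?thesis
    by simp
qed

lemma scaled_cross_sum_minus_score_vanishes:
  "vanishes_in_prob M (\<lambda>n \<omega>. centered_cross_sum n (\<lambda>i. eps i \<omega>) (\<lambda>i. Z i \<omega>) / sqrt (real n)
      - (\<Sum>i<n. eps i \<omega> * (Z i \<omega> - mu)) / sqrt (real n))"
proof -
  interpret E: centered_iid M eps
    by (rule centered_iid_families(3))
  have product: "vanishes_in_prob M (\<lambda>n \<omega>. (\<Sum>i<n. eps i \<omega>) / sqrt (real n) * ((\<Sum>i<n. Z i \<omega> - mu) / real n))"
    by (rule vanishes_in_prob_mult_bounded_second_moment[OF
          centered_iid.sample_mean_vanishes[OF centered_iid_families(1)] _ E.normalized_sum_second_moment])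
      measurable
  have eq: "centered_cross_sum n (\<lambda>i. eps i \<omega>) (\<lambda>i. Z i \<omega>) / sqrt (real n)
      - (\<Sum>i<n. eps i \<omega> * (Z i \<omega> - mu)) / sqrt (real n)
      = - 1 * ((\<Sum>i<n. eps i \<omega>) / sqrt (real n) * ((\<Sum>i<n. Z i \<omega> - mu) / real n))" for n \<omega>
    by (subst centered_cross_sum_diff_const_right[of n _ _ mu, symmetric])
      (simp add: centered_cross_sum_div_sqrt_eq)
  show ?thesis
    unfolding eq by (rule vanishes_in_prob_cmult[OF product])
qed

end

locale ridge_iv_model = iv_model +
  fixes beta0 beta1 pi0 pi1 :: real and lam :: "nat \<Rightarrow> real"
  assumes pi1_nz: "pi1 \<noteq> 0"
    and lam_small: "(\<lambda>n. lam n / sqrt (real n)) \<longlonglongrightarrow> 0"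
begin

definition ridge_statistic :: "nat \<Rightarrow> 'a \<Rightarrow> real" where
  "ridge_statistic n \<omega> =
     (let D = (\<lambda>i. pi0 + pi1 * Z i \<omega> + eta i \<omega>);
          Y = (\<lambda>i. beta0 + beta1 * D i + eps i \<omega>)
      in sqrt (real n) * (ridge_iv n (lam n) Y D (\<lambda>i. Z i \<omega>) - beta1))"

definition score :: "nat \<Rightarrow> 'a \<Rightarrow> real" where
  "score n \<omega> = (\<Sum>i<n. eps i \<omega> * (Z i \<omega> - mu)) / sqrt (real n)"

definition denominator :: "nat \<Rightarrow> 'a \<Rightarrow> real" where
  "denominator n \<omega> = (centered_cross_sum n (\<lambda>i. pi0 + pi1 * Z i \<omega> + eta i \<omega>) (\<lambda>i. Z i \<omega>) + lam n) / real n"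

definition remainder :: "nat \<Rightarrow> 'a \<Rightarrow> real" where
  "remainder n \<omega> = centered_cross_sum n (\<lambda>i. eps i \<omega>) (\<lambda>i. Z i \<omega>) / sqrt (real n) - score n \<omega>
     - beta1 * (lam n / sqrt (real n))"

lemma ridge_statistic_eq:
  assumes n: "n > 0" and V: "denominator n \<omega> \<noteq> 0"
  shows "ridge_statistic n \<omega> = (score n \<omega> + remainder n \<omega>) / denominator n \<omega>"
proof -
  define A where "A = centered_cross_sum n (\<lambda>i. eps i \<omega>) (\<lambda>i. Z i \<omega>)"
  define B where "B = centered_cross_sum n (\<lambda>i. pi0 + pi1 * Z i \<omega> + eta i \<omega>) (\<lambda>i. Z i \<omega>) + lam n"
  have B: "B \<noteq> 0" and V_eq: "denominator n \<omega> = B / real n"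
    using V by (simp_all add: denominator_def B_def)
  have "ridge_statistic n \<omega> = sqrt (real n) * ((A - beta1 * lam n) / B)"
    unfolding ridge_statistic_def Let_def A_def
    by (subst ridge_iv_minus_slope) (use B in \<open>simp_all add: B_def\<close>)
  also have "\<dots> = ((A - beta1 * lam n) / sqrt (real n)) / (B / real n)"
    using n B by (simp add: field_simps real_sqrt_mult[symmetric])
  also have "(A - beta1 * lam n) / sqrt (real n) = score n \<omega> + remainder n \<omega>"
    by (simp add: remainder_def A_def diff_divide_distrib)
  finally show ?thesis
    by (simp add: V_eq)
qed

lemma ridge_statistic_measurable [measurable]: "ridge_statistic n \<in> borel_measurable M"
  unfolding ridge_statistic_def Let_def ridge_iv_eq_centered_cross_sum by measurable

lemma score_measurable [measurable]: "score n \<in> borel_measurable M"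
  unfolding score_def by measurable

lemma denominator_consistent: "vanishes_in_prob M (\<lambda>n \<omega>. denominator n \<omega> - pi1)"
proof -
  have "vanishes_in_prob M (\<lambda>n \<omega>. pi1 * (centered_cross_sum n (\<lambda>i. Z i \<omega>) (\<lambda>i. Z i \<omega>) / real n - 1)
      + centered_cross_sum n (\<lambda>i. eta i \<omega>) (\<lambda>i. Z i \<omega>) / real n + lam n / real n)"
    by (intro vanishes_in_prob_add vanishes_in_prob_cmult sample_variance_consistent
        sample_covariance_consistent vanishes_in_prob_const tendsto_div_real_if_div_sqrt lam_small)
  moreover have "denominator n \<omega> - pi1 = pi1 * (centered_cross_sum n (\<lambda>i. Z i \<omega>) (\<lambda>i. Z i \<omega>) / real n - 1)
      + centered_cross_sum n (\<lambda>i. eta i \<omega>) (\<lambda>i. Z i \<omega>) / real n + lam n / real n" for n \<omega>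
    by (simp add: denominator_def centered_cross_sum_affine_left add_divide_distrib right_diff_distrib)
  ultimately show ?thesis
    by simp
qed

lemma remainder_vanishes: "vanishes_in_prob M remainder"
  unfolding remainder_def[abs_def] score_def
  by (intro vanishes_in_prob_diff scaled_cross_sum_minus_score_vanishes vanishes_in_prob_const
      tendsto_mult_right_zero lam_small)

lemma score_second_moment:
  shows "integrable M (\<lambda>\<omega>. (score n \<omega>)\<^sup>2)" and "expectation (\<lambda>\<omega>. (score n \<omega>)\<^sup>2) \<le> sig_e2"
  using centered_iid.normalized_sum_second_moment[OF centered_iid_families(5), of n] score_variance
  by (simp_all add: score_def)

lemma score_asymptotically_normal:
  "weak_conv_m (\<lambda>n. distr M borel (\<lambda>\<omega>. score n \<omega> / pi1)) (normal_measure 0 (sig_e2 / pi1\<^sup>2))"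
proof -
  have clt: "weak_conv_m (\<lambda>n. distr M borel (score n)) (normal_measure 0 sig_e2)"
    using centered_iid.normalized_sum_asymptotically_normal[OF centered_iid_families(5)] score_variance
    by (simp add: score_def[abs_def])
  have "isCont (\<lambda>x. x / pi1) x" for x
    using pi1_nz by (auto intro!: continuous_intros)
  from weak_conv_m_distr_continuous[OF clt _ real_distribution_normal_measure[OF sig_e2_nonneg] this]
  have "weak_conv_m (\<lambda>n. distr M borel (\<lambda>\<omega>. score n \<omega> / pi1)) (distr (normal_measure 0 sig_e2) borel (\<lambda>x. x / pi1))"
    by (simp add: distr_distr comp_def)
  moreover have "distr (normal_measure 0 sig_e2) borel (\<lambda>x. (1 / pi1) * x) = normal_measure 0 ((1 / pi1)\<^sup>2 * sig_e2)"
    using sig_e2_nonneg pi1_nz by (intro distr_normal_measure_scale) simp_all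
  ultimately show ?thesis
    by (simp add: power_divide)
qed

lemma ridge_statistic_minus_score_vanishes:
  "vanishes_in_prob M (\<lambda>n \<omega>. ridge_statistic n \<omega> - score n \<omega> / pi1)"
proof (rule vanishes_in_prob_ratio[OF denominator_consistent pi1_nz remainder_vanishes _ score_second_moment])
  show "\<forall>\<^sub>F n in sequentially. \<forall>\<omega>\<in>space M. denominator n \<omega> \<noteq> 0 \<longrightarrow>
      ridge_statistic n \<omega> = (score n \<omega> + remainder n \<omega>) / denominator n \<omega>"
    using eventually_gt_at_top[of 0] by eventually_elim (simp add: ridge_statistic_eq)
qed simp_all

theorem ridge_statistic_asymptotically_normal:
  "weak_conv_m (\<lambda>n. distr M borel (ridge_statistic n)) (normal_measure 0 (sig_e2 / pi1\<^sup>2))"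
  by (rule slutsky[OF _ _ score_asymptotically_normal _ ridge_statistic_minus_score_vanishes])
    (use sig_e2_nonneg in \<open>simp_all add: real_distribution_normal_measure\<close>)

end

theorem mainTheorem3:
  fixes M :: "'a measure"
    and eps eta Z :: "nat \<Rightarrow> 'a \<Rightarrow> real"
    and beta0 beta1 pi0 pi1 sig_e2 sig_h2 sig_eh m4 :: real
    and lam :: "nat \<Rightarrow> real"
  assumes P: "prob_space M"
    and meas_eps: "\<And>i. eps i \<in> borel_measurable M"
    and meas_eta: "\<And>i. eta i \<in> borel_measurable M"
    and meas_Z: "\<And>i. Z i \<in> borel_measurable M"
    \<comment> \<open>the triples are mutually independent across i, and within each i the instrument is
        independent of the error pair; together: error pairs i.i.d., Z_i i.i.d., Z independent of errors\<close>
    and indep: "prob_space.indep_vars M (\<lambda>_. borel) (\<lambda>i \<omega>. (eps i \<omega>, eta i \<omega>, Z i \<omega>)) UNIV"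
    and indep_Z_err: "\<And>i (A :: (real \<times> real) set) (B :: real set). A \<in> sets borel \<Longrightarrow> B \<in> sets borel \<Longrightarrow>
         measure M {\<omega> \<in> space M. (eps i \<omega>, eta i \<omega>) \<in> A \<and> Z i \<omega> \<in> B}
         = measure M {\<omega> \<in> space M. (eps i \<omega>, eta i \<omega>) \<in> A} * measure M {\<omega> \<in> space M. Z i \<omega> \<in> B}"
    and ident_err: "\<And>i. distr M borel (\<lambda>\<omega>. (eps i \<omega>, eta i \<omega>)) = distr M borel (\<lambda>\<omega>. (eps 0 \<omega>, eta 0 \<omega>))"
    and ident_Z: "\<And>i. distr M borel (Z i) = distr M borel (Z 0)"
    \<comment> \<open>error moments\<close>
    and int_e2: "integrable M (\<lambda>\<omega>. (eps 0 \<omega>)\<^sup>2)"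
    and int_h2: "integrable M (\<lambda>\<omega>. (eta 0 \<omega>)\<^sup>2)"
    and mean_e: "integral\<^sup>L M (eps 0) = 0"
    and mean_h: "integral\<^sup>L M (eta 0) = 0"
    and var_e: "integral\<^sup>L M (\<lambda>\<omega>. (eps 0 \<omega>)\<^sup>2) = sig_e2"
    and var_h: "integral\<^sup>L M (\<lambda>\<omega>. (eta 0 \<omega>)\<^sup>2) = sig_h2"
    and cov_eh: "integral\<^sup>L M (\<lambda>\<omega>. eps 0 \<omega> * eta 0 \<omega>) = sig_eh"
    \<comment> \<open>Assumption B: Var(Z_i) = 1, finite fourth moment\<close>
    and int_Z4: "integrable M (\<lambda>\<omega>. (Z 0 \<omega>) ^ 4)"
    and m4_def: "integral\<^sup>L M (\<lambda>\<omega>. (Z 0 \<omega>) ^ 4) = m4"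
    and var_Z: "integral\<^sup>L M (\<lambda>\<omega>. (Z 0 \<omega> - integral\<^sup>L M (Z 0))\<^sup>2) = 1"
    \<comment> \<open>relevance and penalty\<close>
    and pi1_nz: "pi1 \<noteq> 0"
    and lam_nonneg: "\<And>n. lam n \<ge> 0"
    and lam_small: "(\<lambda>n. lam n / sqrt (real n)) \<longlonglongrightarrow> 0"
  shows "weak_conv_m
           (\<lambda>n. distr M borel (\<lambda>\<omega>.
              let D = (\<lambda>i. pi0 + pi1 * Z i \<omega> + eta i \<omega>);
                  Y = (\<lambda>i. beta0 + beta1 * D i + eps i \<omega>)
              in sqrt (real n) * (ridge_iv n (lam n) Y D (\<lambda>i. Z i \<omega>) - beta1)))
           (normal_measure 0 (sig_e2 / pi1\<^sup>2))"
proof -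
  interpret ridge_iv_model M eps eta Z sig_e2 beta0 beta1 pi0 pi1 lam
    using P meas_eps meas_eta meas_Z indep indep_Z_err ident_err ident_Z int_e2 int_h2 mean_e mean_h
      var_e int_Z4 var_Z pi1_nz lam_small
    by (simp add: ridge_iv_model_def ridge_iv_model_axioms_def iv_model_def iv_model_axioms_def)
  show ?thesis
    using ridge_statistic_asymptotically_normal by (simp add: ridge_statistic_def[abs_def])
qed

end
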